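(* Let $SI$, $UI$, $CI$ be a nonnegative bivariate information decomposition, let $\overline{SI}(S;X_1,X_2):=\sup_{f} SI(f(S);X_1,X_2)$ (supremum over all functions $f$ from the alphabet of $S$ to an arbitrary finite set), and define $\overline{UI}^*(S;X_1\setminus X_2):=I(S;X_1)-\overline{SI}(S;X_1,X_2)$ and $\overline{UI}^*(S;X_2\setminus X_1):=I(S;X_2)-\overline{SI}(S;X_1,X_2)$. If $UI$ has the Blackwell property, then $\overline{UI}^*$ does not have the Blackwell property.
   Context: All random variables have finite alphabets. A nonnegative bivariate information decomposition consists of nonnegative functions $SI(S;X_1,X_2)$, $UI(S;X_1\setminus X_2)$, $UI(S;X_2\setminus X_1)$, $CI(S;X_1,X_2)$, defined for every joint distribution of $(S,X_1,X_2)$ with arbitrary finite alphabets and depending continuously on it, such that $I(S;X_1X_2)=SI(S;X_1,X_2)+CI(S;X_1,X_2)+UI(S;X_1\setminus X_2)+UI(S;X_2\setminus X_1)$, $I(S;X_1)=SI(S;X_1,X_2)+UI(S;X_1\setminus X_2)$ and $I(S;X_2)=SI(S;X_1,X_2)+UI(S;X_2\setminus X_1)$, where $I$ denotes mutual information. A unique-information measure $U$ has the Blackwell property if for every joint distribution $P_{SX_1X_2}$ (with finite alphabets): $U(S;X_1\setminus X_2)=0$ if and only if there exists a random variable $X_1'$ such that $S - X_2 - X_1'$ is a Markov chain and $P_{SX_1'}=P_{SX_1}$ (i.e. the channel $S\to X_1$ is a garbling of the channel $S\to X_2$). *)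

theory Defs
  imports "HOL-Probability.Probability"
begin

text \<open>Joint distributions of (S, X1, X2). Arbitrary finite alphabets are encoded as
  finite subsets of nat: a joint distribution is a pmf on nat x nat x nat with finite support.\<close>

type_synonym dist3 = "(nat \<times> nat \<times> nat) pmf"

definition fin_dist :: "'a pmf \<Rightarrow> bool" where
  "fin_dist P \<longleftrightarrow> finite (set_pmf P)"

definition mi :: "('a \<times> 'b) pmf \<Rightarrow> real" where
  "mi P = (\<Sum>z\<in>set_pmf P. pmf P z *
      ln (pmf P z / (pmf (map_pmf fst P) (fst z) * pmf (map_pmf snd P) (snd z))))"

definition I_S_X1 :: "dist3 \<Rightarrow> real" where
  "I_S_X1 P = mi (map_pmf (\<lambda>(s, x1, x2). (s, x1)) P)"

definition I_S_X2 :: "dist3 \<Rightarrow> real" where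
  "I_S_X2 P = mi (map_pmf (\<lambda>(s, x1, x2). (s, x2)) P)"

definition I_S_X1X2 :: "dist3 \<Rightarrow> real" where
  "I_S_X1X2 P = mi (map_pmf (\<lambda>(s, x1, x2). (s, (x1, x2))) P)"

definition dist_continuous :: "(dist3 \<Rightarrow> real) \<Rightarrow> bool" where
  "dist_continuous F \<longleftrightarrow>
     (\<forall>A Ps P. finite A \<and> (\<forall>n. set_pmf (Ps n) \<subseteq> A) \<and> set_pmf P \<subseteq> A \<and>
        (\<forall>z. (\<lambda>n. pmf (Ps n) z) \<longlonglongrightarrow> pmf P z) \<longrightarrow>
        (\<lambda>n. F (Ps n)) \<longlonglongrightarrow> F P)"

text \<open>Nonnegative bivariate information decomposition (SI, UI1 = UI(S;X1\X2),
  UI2 = UI(S;X2\X1), CI).\<close>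
definition nonneg_PID ::
  "(dist3 \<Rightarrow> real) \<Rightarrow> (dist3 \<Rightarrow> real) \<Rightarrow> (dist3 \<Rightarrow> real) \<Rightarrow> (dist3 \<Rightarrow> real) \<Rightarrow> bool" where
  "nonneg_PID SI UI1 UI2 CI \<longleftrightarrow>
     (\<forall>P. fin_dist P \<longrightarrow>
        SI P \<ge> 0 \<and> UI1 P \<ge> 0 \<and> UI2 P \<ge> 0 \<and> CI P \<ge> 0 \<and>
        I_S_X1X2 P = SI P + CI P + UI1 P + UI2 P \<and>
        I_S_X1 P = SI P + UI1 P \<and>
        I_S_X2 P = SI P + UI2 P) \<and>
     dist_continuous SI \<and> dist_continuous UI1 \<and> dist_continuous UI2 \<and> dist_continuous CI"

definition markov3 :: "dist3 \<Rightarrow> bool" where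
  "markov3 Q \<longleftrightarrow> (\<forall>a b c.
     pmf Q (a, b, c) * pmf (map_pmf (\<lambda>(a, b, c). b) Q) b =
     pmf (map_pmf (\<lambda>(a, b, c). (a, b)) Q) (a, b) * pmf (map_pmf (\<lambda>(a, b, c). (b, c)) Q) (b, c))"

text \<open>The channel S -> X1 is a garbling of S -> X2: there is X1' (finite alphabet) jointly
  distributed with (S,X2) as in P, such that S - X2 - X1' is Markov and P_{S X1'} = P_{S X1}.
  Q is the joint law of (S, X2, X1').\<close>
definition is_garbling :: "dist3 \<Rightarrow> bool" where
  "is_garbling P \<longleftrightarrow> (\<exists>Q::dist3. fin_dist Q \<and>
     map_pmf (\<lambda>(s, x2, y). (s, x2)) Q = map_pmf (\<lambda>(s, x1, x2). (s, x2)) P \<and>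
     markov3 Q \<and>
     map_pmf (\<lambda>(s, x2, y). (s, y)) Q = map_pmf (\<lambda>(s, x1, x2). (s, x1)) P)"

definition blackwell :: "(dist3 \<Rightarrow> real) \<Rightarrow> bool" where
  "blackwell U \<longleftrightarrow> (\<forall>P. fin_dist P \<longrightarrow> (U P = 0 \<longleftrightarrow> is_garbling P))"

definition SIbar :: "(dist3 \<Rightarrow> real) \<Rightarrow> dist3 \<Rightarrow> real" where
  "SIbar SI P = Sup {SI (map_pmf (\<lambda>(s, x1, x2). (f s, x1, x2)) P) | f :: nat \<Rightarrow> nat. True}"

definition UIbar1 :: "(dist3 \<Rightarrow> real) \<Rightarrow> dist3 \<Rightarrow> real" where
  "UIbar1 SI P = I_S_X1 P - SIbar SI P"

definition UIbar2 :: "(dist3 \<Rightarrow> real) \<Rightarrow> dist3 \<Rightarrow> real" where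
  "UIbar2 SI P = I_S_X2 P - SIbar SI P"

end

theory Submission
  imports Defs
begin

text \<open>Take S uniform on {0,1,2}, X2 the indicator of S = 1, and X1 a fair coin when
  S \<noteq> 2 and X1 = 0 when S = 2. Since X2 merges S = 0 with S = 2 while X1 separates them,
  S \<rightarrow> X1 is not a garbling of S \<rightarrow> X2. Merging S = 0 with S = 1 instead, the coarsening
  f(S) = [S = 2] is a sufficient statistic of S for X1, so I(f(S);X1) = I(S;X1), and
  f(S) \<rightarrow> X1 is a garbling of f(S) \<rightarrow> X2 (copy X2). By the Blackwell property of UI the
  unique information of f(S) vanishes, so SI(f(S);X1,X2) = I(S;X1). The data processing
  inequality bounds every SI(f(S);X1,X2) by I(S;X1), hence the supremum equals I(S;X1) and
  the unique information derived from it vanishes although there is no garbling.\<close>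

lemma sum_set_pmf_map_pmf:
  fixes \<phi> :: "'b \<Rightarrow> real"
  assumes "finite (set_pmf R)"
  shows "(\<Sum>z\<in>set_pmf R. pmf R z * \<phi> (h z)) =
         (\<Sum>w\<in>set_pmf (map_pmf h R). pmf (map_pmf h R) w * \<phi> w)"
proof -
  have "(\<Sum>w\<in>set_pmf (map_pmf h R). pmf (map_pmf h R) w * \<phi> w) =
        measure_pmf.expectation (map_pmf h R) \<phi>"
    by (subst integral_measure_pmf[of "set_pmf (map_pmf h R)"]) (auto simp: assms)
  also have "\<dots> = measure_pmf.expectation R (\<lambda>z. \<phi> (h z))" by simp
  also have "\<dots> = (\<Sum>z\<in>set_pmf R. pmf R z * \<phi> (h z))"
    by (subst integral_measure_pmf[of "set_pmf R"]) (auto simp: assms)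
  finally show ?thesis ..
qed

lemma sum_pmf_Pair_eq_pmf_map_fst:
  assumes "finite B" "snd ` set_pmf T \<subseteq> B"
  shows "(\<Sum>x\<in>B. pmf T (t, x)) = pmf (map_pmf fst T) t"
proof -
  have "pmf (map_pmf fst T) t = measure T (fst -` {t} \<inter> set_pmf T)"
    by (simp add: pmf_map measure_Int_set_pmf)
  also have "fst -` {t} \<inter> set_pmf T = Pair t ` B \<inter> set_pmf T"
    using assms(2) by force
  also have "measure T \<dots> = sum (pmf T) (Pair t ` B)"
    using assms(1) by (simp add: measure_Int_set_pmf measure_measure_pmf_finite)
  also have "\<dots> = (\<Sum>x\<in>B. pmf T (t, x))"
    by (simp add: sum.reindex inj_on_def)
  finally show ?thesis ..
qed

lemma mi_map_prod_fst:
  fixes R :: "('a \<times> 'b) pmf" and g :: "'a \<Rightarrow> 'c"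
  assumes "finite (set_pmf R)"
  shows "mi (map_pmf (map_prod g id) R) =
    (\<Sum>z\<in>set_pmf R. pmf R z * ln (pmf (map_pmf (map_prod g id) R) (g (fst z), snd z) /
       (pmf (map_pmf g (map_pmf fst R)) (g (fst z)) * pmf (map_pmf snd R) (snd z))))"
proof -
  have "map_pmf fst (map_pmf (map_prod g id) R) = map_pmf g (map_pmf fst R)"
    and "map_pmf snd (map_pmf (map_prod g id) R) = map_pmf snd R"
    by (simp_all add: pmf.map_comp o_def)
  then show ?thesis
    unfolding mi_def
    using sum_set_pmf_map_pmf[OF assms, of "\<lambda>w. ln (pmf (map_pmf (map_prod g id) R) w /
      (pmf (map_pmf fst (map_pmf (map_prod g id) R)) (fst w) *
       pmf (map_pmf snd (map_pmf (map_prod g id) R)) (snd w)))" "map_prod g id"]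
    by (simp add: map_prod_def split_beta)
qed

text \<open>Data processing inequality for a function of the first component. The proof is Gibbs'
  inequality: the weights q below form a subprobability on the support of R, and
  ln r \<le> r - 1.\<close>

lemma mi_map_prod_fst_le:
  fixes R :: "('a \<times> 'b) pmf" and g :: "'a \<Rightarrow> 'c"
  assumes fin: "finite (set_pmf R)"
  shows "mi (map_pmf (map_prod g id) R) \<le> mi R"
proof -
  define T where "T = map_pmf (map_prod g id) R"
  define pA where "pA = map_pmf fst R"
  define pB where "pB = map_pmf snd R"
  define pT1 where "pT1 = map_pmf g pA"
  have pT1_fst: "map_pmf fst T = pT1"
    by (simp add: T_def pT1_def pA_def pmf.map_comp o_def)
  define q where "q z = pmf pA (fst z) * pmf T (g (fst z), snd z) / pmf pT1 (g (fst z))" for z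
  have term_ge: "pmf R z * ln (pmf R z / (pmf pA (fst z) * pmf pB (snd z))) -
      pmf R z * ln (pmf T (g (fst z), snd z) / (pmf pT1 (g (fst z)) * pmf pB (snd z)))
      \<ge> pmf R z - q z"
    if z: "z \<in> set_pmf R" for z
  proof -
    obtain s x where zs: "z = (s, x)" by (cases z)
    have pR: "pmf R z > 0" using z by (simp add: pmf_positive_iff)
    have pA: "pmf pA s > 0" using z zs by (force simp: pA_def pmf_positive_iff)
    have pB: "pmf pB x > 0" using z zs by (force simp: pB_def pmf_positive_iff)
    have pT: "pmf T (g s, x) > 0" using z zs by (force simp: T_def pmf_positive_iff)
    have pT1: "pmf pT1 (g s) > 0" using z zs by (force simp: pT1_def pA_def pmf_positive_iff)
    define r where "r = q z / pmf R z"
    have "r > 0" using pR pA pT pT1 by (simp add: r_def q_def zs)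
    have "pmf R z * ln (pmf R z / (pmf pA s * pmf pB x)) -
          pmf R z * ln (pmf T (g s, x) / (pmf pT1 (g s) * pmf pB x)) = pmf R z * - ln r"
      using pR pA pB pT pT1 by (simp add: r_def q_def zs ln_div ln_mult algebra_simps)
    also have "\<dots> \<ge> pmf R z * (1 - r)"
      using ln_le_minus_one[OF \<open>r > 0\<close>] pR by (intro mult_left_mono) auto
    also have "pmf R z * (1 - r) = pmf R z - q z"
      using pR by (simp add: r_def field_simps)
    finally show ?thesis by (simp add: zs)
  qed
  have snd_T: "snd ` set_pmf T \<subseteq> set_pmf pB"
    by (force simp: T_def pB_def)
  have finA: "finite (set_pmf pA)" and finB: "finite (set_pmf pB)"
    using fin by (simp_all add: pA_def pB_def)
  have "set_pmf R \<subseteq> set_pmf pA \<times> set_pmf pB"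
    by (force simp: pA_def pB_def)
  then have "sum q (set_pmf R) \<le> sum q (set_pmf pA \<times> set_pmf pB)"
    using finA finB by (intro sum_mono2) (auto simp: q_def)
  also have "\<dots> = (\<Sum>s\<in>set_pmf pA. pmf pA s / pmf pT1 (g s) * (\<Sum>x\<in>set_pmf pB. pmf T (g s, x)))"
    by (simp add: sum.cartesian_product q_def sum_distrib_left split_beta)
  also have "\<dots> = sum (pmf pA) (set_pmf pA)"
  proof (intro sum.cong refl)
    fix s assume "s \<in> set_pmf pA"
    then have "pmf pT1 (g s) > 0" by (force simp: pT1_def pmf_positive_iff)
    moreover have "(\<Sum>x\<in>set_pmf pB. pmf T (g s, x)) = pmf pT1 (g s)"
      using sum_pmf_Pair_eq_pmf_map_fst[OF finB snd_T] by (simp add: pT1_fst)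
    ultimately show "pmf pA s / pmf pT1 (g s) * (\<Sum>x\<in>set_pmf pB. pmf T (g s, x)) = pmf pA s"
      by simp
  qed
  also have "\<dots> = 1" using finA by (simp add: sum_pmf_eq_1)
  finally have "sum q (set_pmf R) \<le> 1" .
  moreover have "sum (pmf R) (set_pmf R) = 1" using fin by (simp add: sum_pmf_eq_1)
  moreover have "mi T = (\<Sum>z\<in>set_pmf R. pmf R z *
      ln (pmf T (g (fst z), snd z) / (pmf pT1 (g (fst z)) * pmf pB (snd z))))"
    unfolding T_def pT1_def pA_def pB_def by (rule mi_map_prod_fst[OF fin])
  moreover have "mi R = (\<Sum>z\<in>set_pmf R. pmf R z *
      ln (pmf R z / (pmf pA (fst z) * pmf pB (snd z))))"
    by (simp add: mi_def pA_def pB_def)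
  moreover have "sum (\<lambda>z. pmf R z - q z) (set_pmf R) \<le> (\<Sum>z\<in>set_pmf R.
      pmf R z * ln (pmf R z / (pmf pA (fst z) * pmf pB (snd z))) -
      pmf R z * ln (pmf T (g (fst z), snd z) / (pmf pT1 (g (fst z)) * pmf pB (snd z))))"
    using term_ge by (intro sum_mono) simp
  ultimately show ?thesis by (simp add: sum_subtractf T_def)
qed

text \<open>Equality holds when g(A) is a sufficient statistic of A for B, i.e. the conditional
  law of B given A = s only depends on g s.\<close>

lemma mi_map_prod_fst_eq_if_sufficient:
  fixes R :: "('a \<times> 'b) pmf" and g :: "'a \<Rightarrow> 'c"
  assumes fin: "finite (set_pmf R)"
    and sufficient: "\<And>s x. (s, x) \<in> set_pmf R \<Longrightarrow>
       pmf R (s, x) * pmf (map_pmf g (map_pmf fst R)) (g s) =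
       pmf (map_pmf fst R) s * pmf (map_pmf (map_prod g id) R) (g s, x)"
  shows "mi (map_pmf (map_prod g id) R) = mi R"
  unfolding mi_map_prod_fst[OF fin] unfolding mi_def
proof (intro sum.cong refl)
  fix z assume z: "z \<in> set_pmf R"
  obtain s x where zs: "z = (s, x)" by (cases z)
  have "pmf (map_pmf fst R) s > 0" using z zs by (force simp: pmf_positive_iff)
  moreover have "pmf (map_pmf g (map_pmf fst R)) (g s) > 0"
    using z zs by (force simp: pmf_positive_iff)
  ultimately have "pmf (map_pmf (map_prod g id) R) (g s, x) / pmf (map_pmf g (map_pmf fst R)) (g s) =
      pmf R (s, x) / pmf (map_pmf fst R) s"
    using sufficient[OF z[unfolded zs]] by (simp add: field_simps)
  then have "pmf (map_pmf (map_prod g id) R) (g s, x) /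
      (pmf (map_pmf g (map_pmf fst R)) (g s) * pmf (map_pmf snd R) x) =
      pmf R (s, x) / (pmf (map_pmf fst R) s * pmf (map_pmf snd R) x)"
    by (metis divide_divide_eq_left)
  then show "pmf R z * ln (pmf (map_pmf (map_prod g id) R) (g (fst z), snd z) /
      (pmf (map_pmf g (map_pmf fst R)) (g (fst z)) * pmf (map_pmf snd R) (snd z))) =
    pmf R z * ln (pmf R z / (pmf (map_pmf fst R) (fst z) * pmf (map_pmf snd R) (snd z)))"
    by (simp only: zs fst_conv snd_conv)
qed

definition relabel_source :: "(nat \<Rightarrow> nat) \<Rightarrow> dist3 \<Rightarrow> dist3" where
  "relabel_source f P = map_pmf (\<lambda>(s, x1, x2). (f s, x1, x2)) P"

lemma fin_dist_relabel_source: "fin_dist P \<Longrightarrow> fin_dist (relabel_source f P)"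
  by (simp add: fin_dist_def relabel_source_def)

lemma I_S_X1_relabel_source:
  "I_S_X1 (relabel_source f P) = mi (map_pmf (map_prod f id) (map_pmf (\<lambda>(s, x1, x2). (s, x1)) P))"
  by (simp add: I_S_X1_def relabel_source_def pmf.map_comp o_def case_prod_unfold map_prod_def)

lemma SI_relabel_source_le_I_S_X1:
  assumes "nonneg_PID SI UI1 UI2 CI" "fin_dist P"
  shows "SI (relabel_source f P) \<le> I_S_X1 P"
proof -
  have "SI (relabel_source f P) \<le> I_S_X1 (relabel_source f P)"
    using assms fin_dist_relabel_source unfolding nonneg_PID_def by fastforce
  also have "\<dots> \<le> I_S_X1 P"
    unfolding I_S_X1_relabel_source unfolding I_S_X1_def
    by (rule mi_map_prod_fst_le) (use assms(2) in \<open>simp add: fin_dist_def\<close>)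
  finally show ?thesis .
qed

lemma UIbar1_eq_0_if_garbling_relabel_source:
  assumes pid: "nonneg_PID SI UI1 UI2 CI" and bw: "blackwell UI1" and fin: "fin_dist P"
    and garbling: "is_garbling (relabel_source f P)"
    and sufficient: "I_S_X1 (relabel_source f P) = I_S_X1 P"
  shows "UIbar1 SI P = 0"
proof -
  have fin_f: "fin_dist (relabel_source f P)" using fin by (rule fin_dist_relabel_source)
  then have "UI1 (relabel_source f P) = 0" using bw garbling unfolding blackwell_def by blast
  then have "SI (relabel_source f P) = I_S_X1 P"
    using pid fin_f sufficient unfolding nonneg_PID_def by force
  then have "I_S_X1 P \<in> {SI (relabel_source g P) | g. True}"
    by (intro CollectI exI[of _ f]) simp
  then have "SIbar SI P = I_S_X1 P"
    unfolding SIbar_def relabel_source_def[symmetric]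
    using SI_relabel_source_le_I_S_X1[OF pid fin] by (intro cSup_eq_maximum) auto
  then show ?thesis by (simp add: UIbar1_def)
qed

lemma markov3_copy:
  fixes M :: "(nat \<times> nat) pmf"
  shows "markov3 (map_pmf (\<lambda>(s, x). (s, x, x)) M)"
  unfolding markov3_def
proof (intro allI)
  fix a b c :: nat
  let ?Q = "map_pmf (\<lambda>(s, x). (s, x, x)) M"
  have marginals: "map_pmf (\<lambda>(a, b, c). b) ?Q = map_pmf snd M"
      "map_pmf (\<lambda>(a, b, c). (a, b)) ?Q = M"
      "map_pmf (\<lambda>(a, b, c). (b, c)) ?Q = map_pmf (\<lambda>(s, x). (x, x)) M"
    by (simp_all add: pmf.map_comp o_def case_prod_unfold)
  have preimages: "(\<lambda>(s, x). (s, x, x)) -` {(a, b, c)} = (if c = b then {(a, b)} else {})"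
      "(\<lambda>(s, x). (x, x)) -` {(b, c)} = (if c = b then snd -` {b} else {})"
    by auto
  show "pmf ?Q (a, b, c) * pmf (map_pmf (\<lambda>(a, b, c). b) ?Q) b =
     pmf (map_pmf (\<lambda>(a, b, c). (a, b)) ?Q) (a, b) * pmf (map_pmf (\<lambda>(a, b, c). (b, c)) ?Q) (b, c)"
    unfolding marginals pmf_map preimages by (simp add: measure_pmf_single)
qed

lemma is_garbling_if_same_channel:
  assumes "fin_dist P"
    and "map_pmf (\<lambda>(s, x1, x2). (s, x1)) P = map_pmf (\<lambda>(s, x1, x2). (s, x2)) P"
  shows "is_garbling P"
  unfolding is_garbling_def
proof (intro exI conjI)
  let ?Q = "map_pmf (\<lambda>(s, x). (s, x, x)) (map_pmf (\<lambda>(s, x1, x2). (s, x2)) P)"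
  show "fin_dist ?Q" using assms(1) by (simp add: fin_dist_def)
  show "markov3 ?Q" by (rule markov3_copy)
  show "map_pmf (\<lambda>(s, x2, y). (s, x2)) ?Q = map_pmf (\<lambda>(s, x1, x2). (s, x2)) P"
    by (simp add: pmf.map_comp o_def case_prod_unfold)
  show "map_pmf (\<lambda>(s, x2, y). (s, y)) ?Q = map_pmf (\<lambda>(s, x1, x2). (s, x1)) P"
    using assms(2) by (simp add: pmf.map_comp o_def case_prod_unfold)
qed

definition cex_outcomes :: "(nat \<times> nat) set" where
  "cex_outcomes = {(0, 0), (0, 1), (1, 0), (1, 1), (2, 0), (2, 1)}"

definition cex_dist :: dist3 where
  "cex_dist = map_pmf (\<lambda>(s, c). (s, if s = 2 then 0 else c, if s = 1 then 1 else 0))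
     (pmf_of_set cex_outcomes)"

definition cex_coarsening :: "nat \<Rightarrow> nat" where
  "cex_coarsening s = (if s = 2 then 1 else 0)"

lemma fin_dist_cex_dist: "fin_dist cex_dist"
  by (simp add: fin_dist_def cex_dist_def cex_outcomes_def)

lemma pmf_map_pmf_of_set_cex_outcomes:
  "pmf (map_pmf h (pmf_of_set cex_outcomes)) y = card (cex_outcomes \<inter> h -` {y}) / card cex_outcomes"
  by (simp add: pmf_map measure_pmf_of_set cex_outcomes_def)

lemma I_S_X1_relabel_cex_coarsening:
  "I_S_X1 (relabel_source cex_coarsening cex_dist) = I_S_X1 cex_dist"
  unfolding I_S_X1_relabel_source unfolding I_S_X1_def
proof (rule mi_map_prod_fst_eq_if_sufficient)
  let ?R = "map_pmf (\<lambda>(s, x1, x2). (s, x1)) cex_dist"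
  show "finite (set_pmf ?R)"
    by (simp add: cex_dist_def cex_outcomes_def)
  fix s x
  assume "(s, x) \<in> set_pmf ?R"
  then have "(s, x) \<in> {(0, 0), (0, 1), (1, 0), (1, 1), (2, 0)}"
    by (auto simp: cex_dist_def cex_outcomes_def)
  then show "pmf ?R (s, x) * pmf (map_pmf cex_coarsening (map_pmf fst ?R)) (cex_coarsening s) =
      pmf (map_pmf fst ?R) s * pmf (map_pmf (map_prod cex_coarsening id) ?R) (cex_coarsening s, x)"
    unfolding cex_dist_def pmf.map_comp pmf_map_pmf_of_set_cex_outcomes
    by (auto simp: cex_outcomes_def cex_coarsening_def)
qed

text \<open>The swap of the outcomes (0, 1) and (1, 0) carries the law of (f S, X1) onto that of
  (f S, X2).\<close>

lemma is_garbling_relabel_cex_coarsening: "is_garbling (relabel_source cex_coarsening cex_dist)"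
proof (rule is_garbling_if_same_channel)
  show "fin_dist (relabel_source cex_coarsening cex_dist)"
    by (rule fin_dist_relabel_source[OF fin_dist_cex_dist])
  define swap where "swap \<omega> = (if \<omega> = (0, 1) then (1, 0) else if \<omega> = (1, 0) then (0, 1) else \<omega>)"
    for \<omega> :: "nat \<times> nat"
  have "inj_on swap cex_outcomes" and "swap ` cex_outcomes = cex_outcomes"
    unfolding inj_on_def swap_def cex_outcomes_def by auto
  then have swap_invariant: "map_pmf swap (pmf_of_set cex_outcomes) = pmf_of_set cex_outcomes"
    by (simp add: map_pmf_of_set_inj cex_outcomes_def)
  have "map_pmf (\<lambda>(s, x1, x2). (s, x1)) (relabel_source cex_coarsening cex_dist) =
      map_pmf (\<lambda>(s, c). (cex_coarsening s, if s = 2 then 0 else c)) (pmf_of_set cex_outcomes)"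
    unfolding relabel_source_def cex_dist_def pmf.map_comp
    by (intro map_pmf_cong refl) (auto simp: cex_outcomes_def)
  also have "\<dots> = map_pmf (\<lambda>(s, c). (cex_coarsening s, if s = 2 then 0 else c))
      (map_pmf swap (pmf_of_set cex_outcomes))"
    by (simp add: swap_invariant)
  also have "\<dots> = map_pmf (\<lambda>(s, x1, x2). (s, x2)) (relabel_source cex_coarsening cex_dist)"
    unfolding relabel_source_def cex_dist_def pmf.map_comp
    by (intro map_pmf_cong refl) (auto simp: cex_outcomes_def swap_def cex_coarsening_def)
  finally show "map_pmf (\<lambda>(s, x1, x2). (s, x1)) (relabel_source cex_coarsening cex_dist) =
      map_pmf (\<lambda>(s, x1, x2). (s, x2)) (relabel_source cex_coarsening cex_dist)" .
qed

text \<open>In a Markov chain S - X2 - X1', the outcome X1' = 1 seen together with S = 0 (where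
  X2 = 0) would also occur together with S = 2 (where X2 = 0 as well), but X1 = 0 whenever
  S = 2.\<close>

lemma not_is_garbling_cex_dist: "\<not> is_garbling cex_dist"
proof
  assume "is_garbling cex_dist"
  then obtain Q :: dist3 where
    S_X2: "map_pmf (\<lambda>(s, x2, y). (s, x2)) Q = map_pmf (\<lambda>(s, x1, x2). (s, x2)) cex_dist" and
    markov: "markov3 Q" and
    S_X1: "map_pmf (\<lambda>(s, x2, y). (s, y)) Q = map_pmf (\<lambda>(s, x1, x2). (s, x1)) cex_dist"
    unfolding is_garbling_def by blast
  have supp_S_X2: "set_pmf (map_pmf (\<lambda>(s, x2, y). (s, x2)) Q) = {(0, 0), (1, 1), (2, 0)}"
    unfolding S_X2 by (auto simp: cex_dist_def cex_outcomes_def)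
  have supp_S_X1: "set_pmf (map_pmf (\<lambda>(s, x2, y). (s, y)) Q) =
      {(0, 0), (0, 1), (1, 0), (1, 1), (2, 0)}"
    unfolding S_X1 by (auto simp: cex_dist_def cex_outcomes_def)
  have "(0, 1) \<in> set_pmf (map_pmf (\<lambda>(s, x2, y). (s, y)) Q)"
    using supp_S_X1 by simp
  then obtain b where b: "(0, b, 1) \<in> set_pmf Q" by auto
  then have "(0, b) \<in> set_pmf (map_pmf (\<lambda>(s, x2, y). (s, x2)) Q)" by force
  then have "b = 0" using supp_S_X2 by auto
  with b have "(0, 1) \<in> set_pmf (map_pmf (\<lambda>(a, b, c). (b, c)) Q)" by force
  then have "pmf (map_pmf (\<lambda>(a, b, c). (b, c)) Q) (0, 1) \<noteq> 0"
    by (metis set_pmf_iff)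
  moreover have "(2, 0) \<in> set_pmf (map_pmf (\<lambda>(a, b, c). (a, b)) Q)"
    using supp_S_X2 by simp
  then have "pmf (map_pmf (\<lambda>(a, b, c). (a, b)) Q) (2, 0) \<noteq> 0"
    by (metis set_pmf_iff)
  moreover have "(2, 0, 1) \<notin> set_pmf Q"
  proof
    assume "(2, 0, 1) \<in> set_pmf Q"
    then have "(2, 1) \<in> set_pmf (map_pmf (\<lambda>(s, x2, y). (s, y)) Q)" by force
    then show False using supp_S_X1 by auto
  qed
  then have "pmf Q (2, 0, 1) = 0"
    by (metis set_pmf_iff)
  ultimately show False
    using markov unfolding markov3_def by (metis mult_eq_0_iff mult_zero_left)
qed

theorem theorem1:
  fixes SI UI1 UI2 CI :: "dist3 \<Rightarrow> real"
  assumes "nonneg_PID SI UI1 UI2 CI"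
    and "blackwell UI1"
  shows "\<not> blackwell (UIbar1 SI)"
proof
  assume "blackwell (UIbar1 SI)"
  moreover have "UIbar1 SI cex_dist = 0"
    using assms fin_dist_cex_dist is_garbling_relabel_cex_coarsening I_S_X1_relabel_cex_coarsening
    by (rule UIbar1_eq_0_if_garbling_relabel_source)
  ultimately have "is_garbling cex_dist"
    using fin_dist_cex_dist unfolding blackwell_def by blast
  with not_is_garbling_cex_dist show False ..
qed

end
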